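(* Let $G$ be a connected weighted multigraph on the vertex set $V$, $|V|=n\ge2$, with positive edge weights, weighted adjacency matrix $A$ and Perron vector $p$. Let $p'=\sqrt n\,p/\|p\|_2$ and $P'=\operatorname{diag}p'$, and let $G'$ be the weighted graph on $V$ whose weighted adjacency matrix is $P'AP'$. Then for all $i,j\in V$, the long walk distance $d^{LW}(i,j)$ in $G$ equals the resistance distance between $i$ and $j$ in $G'$.
   Context: Loops and multiple edges are allowed; $A=(a_{ij})$ has $a_{ij}$ equal to the sum of weights of the edges joining $i$ and $j$. $\rho$ is the spectral radius of $A$ and the Perron vector $p$ is the positive eigenvector of $A$ for $\rho$ with entries summing to 1. The long walk distance is $d^{LW}(i,j)=\lim_{\alpha\to\infty}\theta\bigl(\tfrac12(\ln r_{ii}+\ln r_{jj})-\ln r_{ij}\bigr)$, where $(r_{ij})=(I-tA)^{-1}$, $t=(\rho+\alpha^{-1})^{-1}$, $\theta=\ln(e+\alpha^{2/n})\frac{\alpha-1}{\ln\alpha}$. For a graph with weighted adjacency matrix $B$, the Laplacian is $L=\operatorname{diag}(B\mathbf 1)-B$ and the resistance distance is $(e_i-e_j)^{\mathsf T}L^{+}(e_i-e_j)$, $L^+$ the Moore–Penrose inverse. *)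

theory Defs
  imports "HOL-Analysis.Analysis"
begin

text \<open>Vertices are the elements of a finite type 'n; a weighted multigraph (loops and
multiple edges allowed, positive weights) is represented by its weighted adjacency matrix,
which is exactly a symmetric matrix with nonnegative real entries.\<close>

definition weighted_adjacency :: "real^'n^'n \<Rightarrow> bool" where
  "weighted_adjacency A \<longleftrightarrow> transpose A = A \<and> (\<forall>i j. A$i$j \<ge> 0)"

definition connected_graph :: "real^'n^'n \<Rightarrow> bool" where
  "connected_graph A \<longleftrightarrow> (\<forall>i j. (i, j) \<in> {(k, l). A$k$l > 0}\<^sup>*)"

definition spectral_radius :: "real^'n^'n \<Rightarrow> real" where
  "spectral_radius A = Sup {cmod c | c. \<exists>v :: complex^'n. v \<noteq> 0 \<and>
      (\<chi> i j. complex_of_real (A$i$j)) *v v = c *s v}"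

definition perron_vector :: "real^'n^'n \<Rightarrow> real^'n" where
  "perron_vector A = (THE p. (\<forall>i. p$i > 0) \<and> A *v p = spectral_radius A *\<^sub>R p
       \<and> sum (\<lambda>i. p$i) UNIV = 1)"

definition long_walk_approx :: "real^'n^'n \<Rightarrow> 'n \<Rightarrow> 'n \<Rightarrow> real \<Rightarrow> real" where
  "long_walk_approx A i j a =
     (let t = inverse (spectral_radius A + inverse a);
          r = matrix_inv (mat 1 - t *\<^sub>R A);
          th = ln (exp 1 + a powr (2 / real CARD('n))) * (a - 1) / ln a
      in th * ((ln (r$i$i) + ln (r$j$j)) / 2 - ln (r$i$j)))"

definition long_walk_dist :: "real^'n^'n \<Rightarrow> 'n \<Rightarrow> 'n \<Rightarrow> real" where
  "long_walk_dist A i j = Lim at_top (long_walk_approx A i j)"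

definition moore_penrose :: "real^'n^'n \<Rightarrow> real^'n^'n" where
  "moore_penrose L = (THE X. L ** X ** L = L \<and> X ** L ** X = X \<and>
       transpose (L ** X) = L ** X \<and> transpose (X ** L) = X ** L)"

definition laplacian :: "real^'n^'n \<Rightarrow> real^'n^'n" where
  "laplacian B = (\<chi> i j. (if i = j then (\<Sum>k\<in>UNIV. B$i$k) else 0) - B$i$j)"

definition resistance_dist :: "real^'n^'n \<Rightarrow> 'n \<Rightarrow> 'n \<Rightarrow> real" where
  "resistance_dist B i j =
     (let e = (\<lambda>k. axis k (1::real)) in (e i - e j) \<bullet> (moore_penrose (laplacian B) *v (e i - e j)))"

end

theory Submission
  imports Defs "HOL-Real_Asymp.Real_Asymp"
begin

text \<open>Let \<open>\<rho>\<close> be the spectral radius, \<open>q\<close> the unit Perron vector and \<open>M = \<rho> I - A\<close>. Perron--Frobenius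
  makes \<open>M\<close> positive semidefinite with kernel spanned by \<open>q\<close>, so splitting off the kernel direction
  gives, for \<open>t = (\<rho> + 1/\<alpha>)\<^sup>-\<^sup>1\<close>,
  \<open>(I - t A)\<^sup>-\<^sup>1 = (\<rho> + 1/\<alpha>) \<alpha> (q q\<^sup>T + W(1/\<alpha>) / \<alpha>)\<close> with \<open>W(\<epsilon>) \<rightarrow> M\<^sup>+\<close> as \<open>\<epsilon> \<rightarrow> 0\<close>.
  Hence \<open>ln r\<^sub>k\<^sub>l = c(\<alpha>) + ln (q\<^sub>k q\<^sub>l) + M\<^sup>+\<^sub>k\<^sub>l / (\<alpha> q\<^sub>k q\<^sub>l) + o(1/\<alpha>)\<close>, and as \<open>\<theta> \<sim> 2\<alpha>/n\<close>
  the long walk distance is \<open>(2/n) (\<onehalf> (M\<^sup>+\<^sub>i\<^sub>i/q\<^sub>i\<^sup>2 + M\<^sup>+\<^sub>j\<^sub>j/q\<^sub>j\<^sup>2) - M\<^sup>+\<^sub>i\<^sub>j/(q\<^sub>i q\<^sub>j))\<close>.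
  On the other side, the Laplacian of \<open>G'\<close> is \<open>n D M D\<close> with \<open>D = diag q\<close>, and solving
  \<open>L y = e\<^sub>i - e\<^sub>j\<close> through \<open>M\<^sup>+\<close> gives the same value for the resistance distance.\<close>

lemma inner_matrix_vector_symmetric:
  fixes S :: "real^'n^'n"
  assumes "transpose S = S"
  shows "x \<bullet> (S *v y) = y \<bullet> (S *v x)"
  by (metis assms dot_lmul_matrix inner_commute transpose_matrix_vector)

lemma inner_matrix_vector_eq_sum:
  fixes A :: "real^'n^'n"
  shows "x \<bullet> (A *v y) = (\<Sum>k\<in>UNIV. \<Sum>l\<in>UNIV. x$k * A$k$l * y$l)"
  by (simp add: inner_vec_def matrix_vector_mult_def sum_distrib_left mult.assoc)

lemma matrix_vector_mult_axis_nth: "((Y::real^'n^'m) *v axis j 1) $ i = Y $ i $ j"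
  by (simp add: matrix_vector_mult_def axis_def if_distrib cong: if_cong)

lemma transpose_eq_imp_nth_sym:
  assumes "transpose X = X" shows "X $ j $ i = X $ i $ j"
proof -
  have "transpose X $ i $ j = X $ i $ j" using assms by simp
  then show ?thesis by (simp add: transpose_def)
qed

lemma transpose_add: "transpose (A + B) = transpose A + transpose (B :: real^'n^'m)"
  by (simp add: transpose_def vec_eq_iff)

lemma transpose_diff: "transpose (A - B) = transpose A - transpose (B :: real^'n^'m)"
  by (simp add: transpose_def vec_eq_iff)

text \<open>Otherwise moving from \<open>x\<close> slightly in the direction \<open>-S x\<close> makes the form negative.\<close>

lemma psd_quadratic_form_eq_0_imp_kernel:
  fixes S :: "real^'n^'n"
  assumes sym: "transpose S = S" and psd: "\<And>z. 0 \<le> z \<bullet> (S *v z)"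
    and x0: "x \<bullet> (S *v x) = 0"
  shows "S *v x = 0"
proof (rule ccontr)
  assume "S *v x \<noteq> 0"
  define y where "y = S *v x"
  define a where "a = y \<bullet> y"
  define b where "b = y \<bullet> (S *v y)"
  define t where "t = - a / (b + 1)"
  have a: "a > 0" using \<open>S *v x \<noteq> 0\<close> by (simp add: a_def y_def)
  have b: "b \<ge> 0" using psd by (simp add: b_def)
  have "0 \<le> (x + t *\<^sub>R y) \<bullet> (S *v (x + t *\<^sub>R y))" by (rule psd)
  also have "\<dots> = x \<bullet> (S *v x) + 2 * t * (y \<bullet> (S *v x)) + t\<^sup>2 * b"
    using inner_matrix_vector_symmetric[OF sym, of x y]
    by (simp add: algebra_simps inner_add_left inner_add_right b_def power2_eq_square)
  also have "\<dots> = t * (2 * a + t * b)"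
    using x0 by (simp add: a_def y_def algebra_simps power2_eq_square)
  also have "\<dots> < 0"
  proof (rule mult_neg_pos)
    show "t < 0" using a b by (simp add: t_def)
    have "t * b = - (a * (b / (b + 1)))" by (simp add: t_def)
    moreover have "a * (b / (b + 1)) \<le> a" using mult_left_mono[of "b / (b + 1)" 1 a] a b by simp
    ultimately show "0 < 2 * a + t * b" using a by linarith
  qed
  finally show False by simp
qed

lemma matrix_inv_eqI:
  fixes X Y :: "real^'n^'n"
  assumes "X ** Y = mat 1"
  shows "matrix_inv X = Y"
proof -
  have YX: "Y ** X = mat 1" using assms matrix_left_right_inverse by blast
  have Z: "X ** matrix_inv X = mat 1 \<and> matrix_inv X ** X = mat 1"
    unfolding matrix_inv_def by (rule someI[of _ Y]) (use assms YX in simp)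
  then have "matrix_inv X = (Y ** X) ** matrix_inv X" using YX by simp
  also have "\<dots> = Y" using Z by (simp flip: matrix_mul_assoc)
  finally show ?thesis .
qed

lemma matrix_inv_right_if_kernel_trivial:
  fixes X :: "real^'n^'n"
  assumes "\<And>x. X *v x = 0 \<Longrightarrow> x = 0"
  shows "X ** matrix_inv X = mat 1"
proof -
  obtain Y where "X ** Y = mat 1"
    using assms invertible_left_inverse invertible_right_inverse matrix_left_invertible_ker by blast
  then show ?thesis using matrix_inv_eqI[of X Y] by simp
qed

lemma matrix_inv_mult_vec:
  fixes X :: "real^'n^'n"
  assumes "X ** Y = mat 1"
  shows "X *v (Y *v x) = x" "Y *v (X *v x) = x"
  using assms matrix_left_right_inverse[of X Y]
  by (simp_all add: matrix_vector_mul_assoc)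

lemma mult_eq_mat_1_iff: "(X::real^'n^'n) ** Y = mat 1 \<longleftrightarrow> (\<forall>x. X *v (Y *v x) = x)"
  by (simp add: matrix_eq matrix_vector_mul_assoc)

lemma matrix_inv_symmetric:
  fixes X :: "real^'n^'n"
  assumes "transpose X = X" "X ** Y = mat 1"
  shows "transpose Y = Y"
proof -
  have "transpose Y ** X = mat 1"
    by (metis assms matrix_transpose_mul transpose_mat)
  then have "transpose Y = transpose Y ** (X ** Y)" using assms by simp
  also have "\<dots> = Y" using \<open>transpose Y ** X = mat 1\<close> by (simp add: matrix_mul_assoc)
  finally show ?thesis .
qed

lemma tendsto_det:
  fixes G :: "'a \<Rightarrow> real^'n^'n"
  assumes "\<And>i j. ((\<lambda>x. G x $ i $ j) \<longlongrightarrow> X $ i $ j) F"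
  shows "((\<lambda>x. det (G x)) \<longlongrightarrow> det X) F"
  unfolding det_def by (intro tendsto_intros assms)

lemma matrix_inv_nth_cramer:
  fixes Y :: "real^'n^'n"
  assumes d: "det Y \<noteq> 0"
  shows "matrix_inv Y $ i $ j = det (\<chi> a b. if b = i then axis j 1 $ a else Y$a$b) / det Y"
proof -
  obtain Y' where Y': "Y ** Y' = mat 1" using d invertible_det_nz invertible_def by blast
  have "Y *v (Y' *v axis j 1) = axis j 1" using matrix_inv_mult_vec(1)[OF Y'] .
  then have "Y' *v axis j 1 = (\<chi> k. det (\<chi> a b. if b = k then axis j 1 $ a else Y$a$b) / det Y)"
    using cramer[OF d] by blast
  then have "(Y' *v axis j 1) $ i = det (\<chi> a b. if b = i then axis j 1 $ a else Y$a$b) / det Y"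
    by simp
  then show ?thesis by (simp add: matrix_inv_eqI[OF Y'] matrix_vector_mult_axis_nth)
qed

lemma tendsto_matrix_inv_nth:
  fixes G :: "'a \<Rightarrow> real^'n^'n"
  assumes lim: "\<And>i j. ((\<lambda>x. G x $ i $ j) \<longlongrightarrow> X $ i $ j) F" and d: "det X \<noteq> 0"
  shows "((\<lambda>x. matrix_inv (G x) $ i $ j) \<longlongrightarrow> matrix_inv X $ i $ j) F"
proof -
  let ?C = "\<lambda>Y::real^'n^'n. (\<chi> a b. if b = i then axis j 1 $ a else Y$a$b) :: real^'n^'n"
  have det_lim: "((\<lambda>x. det (G x)) \<longlongrightarrow> det X) F" by (rule tendsto_det[OF lim])
  have "((\<lambda>x. det (?C (G x))) \<longlongrightarrow> det (?C X)) F"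
    by (rule tendsto_det) (simp add: lim)
  from tendsto_divide[OF this det_lim d]
  have "((\<lambda>x. det (?C (G x)) / det (G x)) \<longlongrightarrow> matrix_inv X $ i $ j) F"
    by (simp add: matrix_inv_nth_cramer[OF d])
  moreover have "eventually (\<lambda>x. det (G x) \<noteq> 0) F"
    by (rule tendsto_imp_eventually_ne[OF det_lim d])
  then have "eventually (\<lambda>x. det (?C (G x)) / det (G x) = matrix_inv (G x) $ i $ j) F"
    by (auto elim!: eventually_mono simp: matrix_inv_nth_cramer)
  ultimately show ?thesis by (rule Lim_transform_eventually)
qed

lemma quadratic_form_axis_diff:
  fixes X :: "real^'n^'n"
  assumes sym: "X $ j $ i = X $ i $ j"
  shows "(a *\<^sub>R axis i 1 - b *\<^sub>R axis j 1) \<bullet> (X *v (a *\<^sub>R axis i 1 - b *\<^sub>R axis j 1))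
       = a * a * X $ i $ i + b * b * X $ j $ j - 2 * a * b * X $ i $ j"
  using sym
  by (simp add: matrix_vector_mult_diff_distrib matrix_vector_mult_scaleR inner_diff_left
      inner_diff_right inner_axis' matrix_vector_mult_axis_nth algebra_simps)


lemma quadratic_form_maximizer_exists:
  fixes A :: "real^'n^'n"
  obtains u where "norm u = 1" "\<And>x. x \<bullet> (A *v x) \<le> (u \<bullet> (A *v u)) * (x \<bullet> x)"
proof -
  have "compact (sphere (0::real^'n) 1)" by simp
  moreover have "sphere (0::real^'n) 1 \<noteq> {}" by simp
  moreover have "continuous_on (sphere 0 1) (\<lambda>x::real^'n. x \<bullet> (A *v x))"
    by (intro continuous_intros linear_continuous_on bounded_linear_intros) (simp add: linear_linear)
  ultimately obtain u where u: "u \<in> sphere 0 1"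
    and umax: "\<And>y. y \<in> sphere 0 1 \<Longrightarrow> y \<bullet> (A *v y) \<le> u \<bullet> (A *v u)"
    by (blast dest: continuous_attains_sup)
  have "x \<bullet> (A *v x) \<le> (u \<bullet> (A *v u)) * (x \<bullet> x)" for x
  proof (cases "x = 0")
    case False
    define y where "y = (1 / norm x) *\<^sub>R x"
    have "y \<bullet> (A *v y) \<le> u \<bullet> (A *v u)" using False by (intro umax) (simp add: y_def)
    moreover have "y \<bullet> (A *v y) = (x \<bullet> (A *v x)) / (x \<bullet> x)"
      using False by (simp add: y_def matrix_vector_mult_scaleR
          power2_norm_eq_inner[symmetric] power2_eq_square)
    ultimately show ?thesis using False by (simp add: divide_le_eq)
  qed simp
  with u that show ?thesis by simp
qed

section \<open>Symmetric matrices with a one-dimensional kernel\<close>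

lemma moore_penrose_unique:
  fixes L X Z :: "real^'n^'n"
  assumes X1: "L ** X ** L = L" and X2: "X ** L ** X = X" and X3: "transpose (L ** X) = L ** X"
    and X4: "transpose (X ** L) = X ** L"
    and Z1: "L ** Z ** L = L" and Z2: "Z ** L ** Z = Z" and Z3: "transpose (L ** Z) = L ** Z"
    and Z4: "transpose (Z ** L) = Z ** L"
  shows "Z = X"
proof -
  have tL1: "transpose L = transpose L ** (L ** Z)"
  proof -
    have "transpose L = transpose (L ** Z ** L)" using Z1 by simp
    also have "\<dots> = transpose L ** transpose (L ** Z)" by (simp add: matrix_transpose_mul)
    finally show ?thesis using Z3 by simp
  qed
  have tL2: "transpose L = (X ** L) ** transpose L"
  proof -
    have "transpose L = transpose (L ** X ** L)" using X1 by simp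
    also have "\<dots> = transpose (X ** L) ** transpose L" by (simp add: matrix_transpose_mul matrix_mul_assoc)
    finally show ?thesis using X4 by simp
  qed
  have "X = X ** transpose (L ** X)" using X2 X3 by (simp add: matrix_mul_assoc)
  also have "\<dots> = X ** (transpose X ** (transpose L ** (L ** Z)))"
    using tL1 by (simp add: matrix_transpose_mul)
  also have "\<dots> = X ** (transpose (L ** X) ** (L ** Z))" by (simp add: matrix_transpose_mul matrix_mul_assoc)
  also have "\<dots> = X ** L ** Z" using X2 X3 by (simp add: matrix_mul_assoc)
  finally have eX: "X = X ** L ** Z" .
  have "Z = transpose (Z ** L) ** Z" using Z2 Z4 by simp
  also have "\<dots> = ((X ** L) ** transpose L ** transpose Z) ** Z"
    using tL2 by (simp add: matrix_transpose_mul)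
  also have "\<dots> = (X ** L) ** transpose (Z ** L) ** Z" by (simp add: matrix_transpose_mul matrix_mul_assoc)
  also have "\<dots> = X ** L ** (Z ** L ** Z)" using Z4 by (simp add: matrix_mul_assoc)
  finally show ?thesis using eX Z2 by simp
qed

lemma moore_penrose_eqI:
  fixes L X :: "real^'n^'n"
  assumes "L ** X ** L = L" "X ** L ** X = X" "transpose (L ** X) = L ** X"
    "transpose (X ** L) = X ** L"
  shows "moore_penrose L = X"
  unfolding moore_penrose_def by (rule the_equality) (use assms moore_penrose_unique in blast)+

definition outer :: "real^'n \<Rightarrow> real^'n \<Rightarrow> real^'n^'n" where
  "outer x y = (\<chi> k l. x$k * y$l)"

lemma outer_mult_vec: "outer x y *v v = (y \<bullet> v) *\<^sub>R x"
  by (simp add: outer_def vec_eq_iff matrix_vector_mult_def inner_vec_def sum_distrib_left mult_ac)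

lemma transpose_outer_self: "transpose (outer u u) = outer u u"
  by (simp add: outer_def transpose_def vec_eq_iff mult.commute)

locale simple_kernel =
  fixes S :: "real^'n^'n" and u :: "real^'n"
  assumes symmetric: "transpose S = S" and unit: "u \<bullet> u = 1" and kernel_u: "S *v u = 0"
    and kernel_span: "\<And>x. S *v x = 0 \<Longrightarrow> \<exists>c. x = c *\<^sub>R u"
begin

lemma inner_u_mult: "u \<bullet> (S *v x) = 0"
  using inner_matrix_vector_symmetric[OF symmetric, of u x] kernel_u by simp

lemma deflated_kernel_trivial:
  assumes "(S + outer u u) *v x = 0" shows "x = 0"
proof -
  have Sx: "S *v x + (u \<bullet> x) *\<^sub>R u = 0"
    using assms by (simp add: matrix_vector_mult_add_rdistrib outer_mult_vec)
  then have "u \<bullet> (S *v x + (u \<bullet> x) *\<^sub>R u) = 0" by simp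
  then have "u \<bullet> x = 0" by (simp add: inner_add_right inner_u_mult unit)
  with Sx obtain c where "x = c *\<^sub>R u" using kernel_span by auto
  with \<open>u \<bullet> x = 0\<close> show ?thesis by (simp add: unit)
qed

abbreviation deflated_inv :: "real^'n^'n" where
  "deflated_inv \<equiv> matrix_inv (S + outer u u)"

lemma mult_deflated_inv: "(S + outer u u) ** deflated_inv = mat 1"
  by (rule matrix_inv_right_if_kernel_trivial) (use deflated_kernel_trivial in blast)

lemma deflated_inv_u: "deflated_inv *v u = u"
proof -
  have "(S + outer u u) *v u = u"
    by (simp add: matrix_vector_mult_add_rdistrib outer_mult_vec kernel_u unit)
  then show ?thesis using matrix_inv_mult_vec(2)[OF mult_deflated_inv, of u] by simp
qed

lemma transpose_deflated_inv: "transpose deflated_inv = deflated_inv"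
  by (rule matrix_inv_symmetric[OF _ mult_deflated_inv])
    (simp add: transpose_add symmetric transpose_outer_self)

lemma inner_u_deflated_inv: "u \<bullet> (deflated_inv *v x) = u \<bullet> x"
  using inner_matrix_vector_symmetric[OF transpose_deflated_inv, of u x] deflated_inv_u
  by (simp add: inner_commute)

text \<open>With \<open>P = u u\<^sup>T\<close> and \<open>K = (S + P)\<^sup>-\<^sup>1\<close> one has \<open>S P = P S = 0\<close> and \<open>K P = P K = P\<close>,
  so \<open>S (K - P) = (K - P) S = I - P\<close>.\<close>

lemma mult_deflated_inv_diff: "S ** (deflated_inv - outer u u) = mat 1 - outer u u"
proof (unfold matrix_eq, intro allI)
  fix v
  have "(S + outer u u) *v (deflated_inv *v v) = v"
    by (rule matrix_inv_mult_vec(1)[OF mult_deflated_inv])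
  then show "(S ** (deflated_inv - outer u u)) *v v = (mat 1 - outer u u) *v v"
    by (simp add: matrix_vector_mult_add_rdistrib matrix_vector_mult_diff_rdistrib
        matrix_vector_mult_diff_distrib outer_mult_vec inner_u_deflated_inv kernel_u
        algebra_simps flip: matrix_vector_mul_assoc)
qed

lemma deflated_inv_diff_mult: "(deflated_inv - outer u u) ** S = mat 1 - outer u u"
proof (unfold matrix_eq, intro allI)
  fix v
  have "deflated_inv *v (S *v v) + (u \<bullet> v) *\<^sub>R u = v"
    using matrix_inv_mult_vec(2)[OF mult_deflated_inv, of v]
    by (simp add: matrix_vector_mult_add_rdistrib outer_mult_vec matrix_vector_right_distrib
        matrix_vector_mult_scaleR deflated_inv_u)
  then show "((deflated_inv - outer u u) ** S) *v v = (mat 1 - outer u u) *v v"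
    by (simp add: matrix_vector_mult_diff_rdistrib outer_mult_vec inner_u_mult
        flip: matrix_vector_mul_assoc) (simp add: algebra_simps)
qed

lemma moore_penrose_eq: "moore_penrose S = deflated_inv - outer u u"
proof (rule moore_penrose_eqI)
  have tP: "transpose (mat 1 - outer u u) = mat 1 - outer u u"
    by (simp add: transpose_def vec_eq_iff outer_def mat_def mult.commute)
  show "S ** (deflated_inv - outer u u) ** S = S"
    unfolding mult_deflated_inv_diff matrix_eq
    by (simp add: matrix_vector_mult_diff_rdistrib outer_mult_vec inner_u_mult
        flip: matrix_vector_mul_assoc)
  show "(deflated_inv - outer u u) ** S ** (deflated_inv - outer u u) = deflated_inv - outer u u"
  proof (unfold deflated_inv_diff_mult matrix_eq, intro allI)
    fix v
    define y where "y = (deflated_inv - outer u u) *v v"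
    have "u \<bullet> y = 0"
      by (simp add: y_def matrix_vector_mult_diff_rdistrib inner_diff_right outer_mult_vec
          inner_u_deflated_inv unit)
    have "((mat 1 - outer u u) ** (deflated_inv - outer u u)) *v v = (mat 1 - outer u u) *v y"
      by (simp only: y_def matrix_vector_mul_assoc)
    also have "\<dots> = y"
      using \<open>u \<bullet> y = 0\<close> by (simp add: matrix_vector_mult_diff_rdistrib outer_mult_vec)
    finally show "((mat 1 - outer u u) ** (deflated_inv - outer u u)) *v v = (deflated_inv - outer u u) *v v"
      by (simp only: y_def)
  qed
  show "transpose (S ** (deflated_inv - outer u u)) = S ** (deflated_inv - outer u u)"
    unfolding mult_deflated_inv_diff by (rule tP)
  show "transpose ((deflated_inv - outer u u) ** S) = (deflated_inv - outer u u) ** S"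
    unfolding deflated_inv_diff_mult by (rule tP)
qed

lemma mult_moore_penrose: "S *v (moore_penrose S *v v) = v - (u \<bullet> v) *\<^sub>R u"
proof -
  have "S *v (moore_penrose S *v v) = (S ** moore_penrose S) *v v"
    by (rule matrix_vector_mul_assoc)
  also have "S ** moore_penrose S = mat 1 - outer u u"
    unfolding moore_penrose_eq by (rule mult_deflated_inv_diff)
  finally show ?thesis by (simp add: matrix_vector_mult_diff_rdistrib outer_mult_vec)
qed

lemma transpose_moore_penrose: "transpose (moore_penrose S) = moore_penrose S"
  by (simp add: moore_penrose_eq transpose_diff transpose_deflated_inv transpose_outer_self)


definition deflated_resolvent :: "real \<Rightarrow> real^'n^'n" where
  "deflated_resolvent e =
     matrix_inv (S + outer u u + e *\<^sub>R mat 1) - (1 / (1 + e)) *\<^sub>R outer u u"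

lemma mult_shifted_deflated_inv:
  assumes psd: "\<And>x. 0 \<le> x \<bullet> (S *v x)" and "e \<ge> 0"
  shows "(S + outer u u + e *\<^sub>R mat 1) ** matrix_inv (S + outer u u + e *\<^sub>R mat 1) = mat 1"
proof (rule matrix_inv_right_if_kernel_trivial)
  fix x assume "(S + outer u u + e *\<^sub>R mat 1) *v x = 0"
  then have "S *v x + (u \<bullet> x) *\<^sub>R u + e *\<^sub>R x = 0"
    by (simp add: matrix_vector_mult_add_rdistrib outer_mult_vec flip: scaleR_matrix_vector_assoc)
  then have "x \<bullet> (S *v x + (u \<bullet> x) *\<^sub>R u + e *\<^sub>R x) = 0" by simp
  then have "x \<bullet> (S *v x) + (u \<bullet> x)\<^sup>2 + e * (x \<bullet> x) = 0"
    by (simp add: inner_add_right power2_eq_square inner_commute)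
  moreover have "0 \<le> x \<bullet> (S *v x)" "0 \<le> e * (x \<bullet> x)" using psd \<open>e \<ge> 0\<close> by simp_all
  ultimately have "x \<bullet> (S *v x) = 0" "(u \<bullet> x)\<^sup>2 = 0"
    using zero_le_power2[of "u \<bullet> x"] by linarith+
  then have "x \<bullet> (S *v x) = 0" "u \<bullet> x = 0" by simp_all
  then obtain c where "x = c *\<^sub>R u"
    using kernel_span psd_quadratic_form_eq_0_imp_kernel[OF symmetric psd] by blast
  with \<open>u \<bullet> x = 0\<close> show "x = 0" by (simp add: unit)
qed

lemma resolvent_decomposition:
  assumes psd: "\<And>x. 0 \<le> x \<bullet> (S *v x)" and e: "e > 0"
  shows "(S + e *\<^sub>R mat 1) ** ((1 / e) *\<^sub>R outer u u + deflated_resolvent e) = mat 1"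
proof (unfold mult_eq_mat_1_iff, intro allI)
  fix x
  let ?N = "S + outer u u + e *\<^sub>R mat 1"
  let ?K = "matrix_inv ?N"
  have NK: "?N ** ?K = mat 1" using mult_shifted_deflated_inv psd e by simp
  have Nv: "?N *v y = S *v y + (u \<bullet> y) *\<^sub>R u + e *\<^sub>R y" for y
    by (simp add: matrix_vector_mult_add_rdistrib outer_mult_vec flip: scaleR_matrix_vector_assoc)
  have "?N *v u = (1 + e) *\<^sub>R u"
    by (simp add: matrix_vector_mult_add_rdistrib outer_mult_vec kernel_u unit algebra_simps
        flip: scaleR_matrix_vector_assoc)
  then have "(1 + e) *\<^sub>R (?K *v u) = u"
    using matrix_inv_mult_vec(2)[OF NK, of u] by (simp only: matrix_vector_mult_scaleR)
  then have "(1 / (1 + e)) *\<^sub>R ((1 + e) *\<^sub>R (?K *v u)) = (1 / (1 + e)) *\<^sub>R u"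
    by (rule arg_cong)
  then have Ku: "?K *v u = (1 / (1 + e)) *\<^sub>R u" using e by simp
  have "transpose ?K = ?K"
    by (rule matrix_inv_symmetric[OF _ NK])
      (simp add: transpose_add transpose_scalar symmetric transpose_outer_self)
  then have uK: "u \<bullet> (?K *v x) = (u \<bullet> x) / (1 + e)"
    using inner_matrix_vector_symmetric[of ?K u x] Ku by (simp add: inner_commute)
  define v where "v = ?K *v x"
  have "?N *v v = x" unfolding v_def by (rule matrix_inv_mult_vec(1)[OF NK])
  moreover have "u \<bullet> v = (u \<bullet> x) / (1 + e)" unfolding v_def by (rule uK)
  ultimately have "S *v v + ((u \<bullet> x) / (1 + e)) *\<^sub>R u + e *\<^sub>R v = x" by (simp only: Nv)
  then have SK: "S *v v + e *\<^sub>R v = x - ((u \<bullet> x) / (1 + e)) *\<^sub>R u"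
    by (simp add: algebra_simps)
  have "((1 / e) *\<^sub>R outer u u + deflated_resolvent e) *v x
      = v + ((u \<bullet> x) / e - (u \<bullet> x) / (1 + e)) *\<^sub>R u"
    by (simp add: deflated_resolvent_def v_def matrix_vector_mult_add_rdistrib
        matrix_vector_mult_diff_rdistrib outer_mult_vec algebra_simps flip: scaleR_matrix_vector_assoc)
  then have "(S + e *\<^sub>R mat 1) *v (((1 / e) *\<^sub>R outer u u + deflated_resolvent e) *v x)
      = (S *v v + e *\<^sub>R v) + (e * ((u \<bullet> x) / e - (u \<bullet> x) / (1 + e))) *\<^sub>R u"
    by (simp add: matrix_vector_mult_add_rdistrib matrix_vector_right_distrib
        matrix_vector_mult_scaleR kernel_u flip: scaleR_matrix_vector_assoc)
  also have "e * ((u \<bullet> x) / e - (u \<bullet> x) / (1 + e)) = (u \<bullet> x) - e * (u \<bullet> x) / (1 + e)"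
    using e by (simp add: right_diff_distrib)
  also have "\<dots> = (u \<bullet> x) / (1 + e)"
    using e by (simp add: field_simps)
  finally show "(S + e *\<^sub>R mat 1) *v (((1 / e) *\<^sub>R outer u u + deflated_resolvent e) *v x) = x"
    by (simp add: SK)
qed

lemma tendsto_deflated_resolvent:
  "((\<lambda>a. deflated_resolvent (1 / a) $ i $ j) \<longlongrightarrow> moore_penrose S $ i $ j) at_top"
proof -
  have inv0: "((\<lambda>a::real. 1 / a) \<longlongrightarrow> 0) at_top" by real_asymp
  have "det (S + outer u u) \<noteq> 0"
    using mult_deflated_inv invertible_det_nz invertible_right_inverse by blast
  moreover have "((\<lambda>a. (S + outer u u + (1 / a) *\<^sub>R mat 1) $ k $ l) \<longlongrightarrow> (S + outer u u) $ k $ l) at_top"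
    for k l
    using tendsto_add[OF tendsto_const tendsto_mult[OF inv0 tendsto_const],
        of "(S + outer u u) $ k $ l" "(mat 1 :: real^'n^'n) $ k $ l"]
    by simp
  ultimately have "((\<lambda>a. matrix_inv (S + outer u u + (1 / a) *\<^sub>R mat 1) $ i $ j)
      \<longlongrightarrow> deflated_inv $ i $ j) at_top"
    by (intro tendsto_matrix_inv_nth)
  moreover have "((\<lambda>a::real. 1 / (1 + 1 / a)) \<longlongrightarrow> 1) at_top" by real_asymp
  ultimately have "((\<lambda>a. matrix_inv (S + outer u u + (1 / a) *\<^sub>R mat 1) $ i $ j
      - 1 / (1 + 1 / a) * outer u u $ i $ j) \<longlongrightarrow> deflated_inv $ i $ j - 1 * outer u u $ i $ j) at_top"
    by (intro tendsto_diff tendsto_mult tendsto_const)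
  then show ?thesis by (simp add: deflated_resolvent_def moore_penrose_eq)
qed


end

section \<open>Perron--Frobenius theory of connected multigraphs\<close>

locale connected_multigraph =
  fixes A :: "real^'n^'n"
  assumes weighted: "weighted_adjacency A" and connected: "connected_graph A"
begin

lemma symmetric: "transpose A = A" and nonneg: "A$i$j \<ge> 0"
  using weighted by (auto simp: weighted_adjacency_def)

text \<open>A zero entry of a nonnegative eigenvector propagates along the edges of the graph.\<close>

lemma nonneg_eigenvector_pos:
  assumes y0: "\<And>k. y$k \<ge> 0" and ey: "A *v y = c *\<^sub>R y" and "y \<noteq> 0"
  shows "y$k > 0"
proof (rule ccontr)
  assume "\<not> y$k > 0"
  then have yk: "y$k = 0" using y0[of k] by simp
  have zero_step: "y$l = 0" if "y$m = 0" "A$m$l > 0" for m l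
  proof -
    have "(\<Sum>j\<in>UNIV. A$m$j * y$j) = c * y$m"
      using arg_cong[OF ey, of "\<lambda>v. v$m"] by (simp add: matrix_vector_mult_def)
    with that(1) have "(\<Sum>j\<in>UNIV. A$m$j * y$j) = 0" by simp
    then have "A$m$l * y$l = 0" using nonneg y0 by (simp add: sum_nonneg_eq_0_iff)
    then show ?thesis using that(2) by simp
  qed
  have "y$l = 0" for l
    using connected[unfolded connected_graph_def, rule_format, of k l]
    by induction (use yk zero_step in blast)+
  then have "y = 0" by (simp add: vec_eq_iff)
  with \<open>y \<noteq> 0\<close> show False by simp
qed

text \<open>Subtract the largest multiple of \<open>w\<close> that stays below \<open>y\<close>; the remainder is a nonnegative
  eigenvector with a zero entry, hence zero.\<close>

lemma eigenvector_eq_multiple: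
  assumes wpos: "\<And>k. w$k > 0" and ew: "A *v w = r *\<^sub>R w" and ey: "A *v y = r *\<^sub>R y"
  shows "\<exists>c. y = c *\<^sub>R w"
proof -
  define c where "c = Min ((\<lambda>k. y$k / w$k) ` UNIV)"
  have "c \<in> (\<lambda>k. y$k / w$k) ` UNIV" unfolding c_def by (rule Min_in) auto
  then obtain k0 where k0: "c = y$k0 / w$k0" by blast
  define z where "z = y - c *\<^sub>R w"
  have z0: "z$k \<ge> 0" for k
    using Min_le[of "(\<lambda>k. y$k / w$k) ` UNIV" "y$k / w$k"] wpos[of k]
    by (simp add: z_def c_def pos_le_divide_eq mult.commute)
  have ez: "A *v z = r *\<^sub>R z" using ew ey by (simp add: z_def algebra_simps)
  have "z$k0 = 0" using k0 wpos[of k0] by (simp add: z_def)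
  then have "z = 0" using nonneg_eigenvector_pos[OF z0 ez, of k0] by auto
  then show ?thesis unfolding z_def by auto
qed

text \<open>If \<open>u\<close> maximises the Rayleigh quotient, so does \<open>|u|\<close>, because \<open>A\<close> is nonnegative;
  a maximiser is an eigenvector, and a nonnegative eigenvector is positive.\<close>

lemma perron_eigenpair_exists:
  "\<exists>w r. (\<forall>k. w$k > 0) \<and> A *v w = r *\<^sub>R w \<and> (\<forall>x. x \<bullet> (A *v x) \<le> r * (x \<bullet> x)) \<and> r \<ge> 0"
proof -
  obtain u where u1: "norm u = 1" and umax: "\<And>x. x \<bullet> (A *v x) \<le> (u \<bullet> (A *v u)) * (x \<bullet> x)"
    using quadratic_form_maximizer_exists by blast
  define r where "r = u \<bullet> (A *v u)"
  define w where "w = (\<chi> k. \<bar>u$k\<bar>)"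
  have w0: "w$k \<ge> 0" for k by (simp add: w_def)
  have "u \<bullet> u = 1" using u1 by (metis power2_norm_eq_inner power_one)
  then have ww: "w \<bullet> w = 1" by (simp add: w_def inner_vec_def abs_mult_self_eq)
  have "r \<le> w \<bullet> (A *v w)"
    unfolding r_def inner_matrix_vector_eq_sum
  proof (intro sum_mono)
    fix k l
    show "u$k * A$k$l * u$l \<le> w$k * A$k$l * w$l"
      using nonneg[of k l] by (simp add: w_def) (metis abs_ge_self abs_mult abs_of_nonneg)
  qed
  moreover have "w \<bullet> (A *v w) \<le> r" using umax[of w] ww by (simp add: r_def)
  ultimately have wr: "w \<bullet> (A *v w) = r" by simp
  define S where "S = r *\<^sub>R mat 1 - A"
  have Sv: "S *v x = r *\<^sub>R x - A *v x" for x
    by (simp add: S_def matrix_vector_mult_diff_rdistrib flip: scaleR_matrix_vector_assoc)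
  have "S *v w = 0"
  proof (rule psd_quadratic_form_eq_0_imp_kernel)
    show "transpose S = S" using symmetric by (simp add: S_def transpose_diff transpose_scalar)
    show "0 \<le> x \<bullet> (S *v x)" for x using umax[of x] by (simp add: Sv inner_diff_right r_def)
    show "w \<bullet> (S *v w) = 0" using wr ww by (simp add: Sv inner_diff_right)
  qed
  then have ew: "A *v w = r *\<^sub>R w" by (simp add: Sv)
  have "w \<noteq> 0" using ww by auto
  then have "w$k > 0" for k using nonneg_eigenvector_pos[OF w0 ew] by blast
  moreover have "r \<ge> 0"
    unfolding wr[symmetric] inner_matrix_vector_eq_sum using nonneg w0 by (intro sum_nonneg) simp
  ultimately show ?thesis using ew umax unfolding r_def[symmetric] by blast
qed

text \<open>For a complex eigenvector \<open>v\<close> the vector \<open>|v|\<close> satisfies \<open>|c| |v| \<le> A |v|\<close> entrywise.\<close>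

lemma complex_eigenvalue_norm_le:
  assumes ray: "\<And>x. x \<bullet> (A *v x) \<le> r * (x \<bullet> x)"
    and "v \<noteq> 0" and ev: "(\<chi> i j. complex_of_real (A$i$j)) *v v = c *s v"
  shows "cmod c \<le> r"
proof -
  define a where "a = (\<chi> k. cmod (v$k))"
  have le: "cmod c * a$k \<le> (A *v a)$k" for k
  proof -
    have "(\<Sum>l\<in>UNIV. complex_of_real (A$k$l) * v$l) = c * v$k"
      using arg_cong[OF ev, of "\<lambda>x. x$k"] by (simp add: matrix_vector_mult_def)
    then have "cmod c * a$k = cmod (\<Sum>l\<in>UNIV. complex_of_real (A$k$l) * v$l)"
      by (simp add: a_def norm_mult)
    also have "\<dots> \<le> (\<Sum>l\<in>UNIV. cmod (complex_of_real (A$k$l) * v$l))" by (rule norm_sum)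
    also have "\<dots> = (A *v a)$k"
      using nonneg by (simp add: matrix_vector_mult_def a_def norm_mult)
    finally show ?thesis .
  qed
  have "cmod c * (a \<bullet> a) = (\<Sum>k\<in>UNIV. a$k * (cmod c * a$k))"
    by (simp add: inner_vec_def sum_distrib_left mult_ac)
  also have "\<dots> \<le> (\<Sum>k\<in>UNIV. a$k * (A *v a)$k)"
    by (intro sum_mono mult_left_mono le) (simp add: a_def)
  also have "\<dots> = a \<bullet> (A *v a)" by (simp add: inner_vec_def)
  also have "\<dots> \<le> r * (a \<bullet> a)" by (rule ray)
  finally have "cmod c * (a \<bullet> a) \<le> r * (a \<bullet> a)" .
  moreover have "a \<noteq> 0"
    using \<open>v \<noteq> 0\<close> by (auto simp: a_def vec_eq_iff)
  ultimately show ?thesis by simp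
qed

lemma spectral_radius_eq:
  assumes wpos: "\<And>k. w$k > 0" and ew: "A *v w = r *\<^sub>R w"
    and ray: "\<And>x. x \<bullet> (A *v x) \<le> r * (x \<bullet> x)" and "r \<ge> 0"
  shows "spectral_radius A = r"
  unfolding spectral_radius_def
proof (rule cSup_eq_maximum)
  define v where "v = (\<chi> k. complex_of_real (w$k))"
  have "v \<noteq> 0"
    using wpos by (metis v_def less_irrefl of_real_eq_0_iff vec_lambda_beta zero_index)
  moreover have "(\<chi> i j. complex_of_real (A$i$j)) *v v = complex_of_real r *s v"
  proof -
    have "(\<Sum>j\<in>UNIV. A$k$j * w$j) = r * w$k" for k
      using arg_cong[OF ew, of "\<lambda>x. x$k"] by (simp add: matrix_vector_mult_def)
    then show ?thesis
      by (simp add: vec_eq_iff matrix_vector_mult_def v_def flip: of_real_mult of_real_sum)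
  qed
  ultimately show "r \<in> {cmod c |c. \<exists>v. v \<noteq> 0 \<and> (\<chi> i j. complex_of_real (A$i$j)) *v v = c *s v}"
    using \<open>r \<ge> 0\<close> by (intro CollectI exI[of _ "complex_of_real r"]) auto
qed (use complex_eigenvalue_norm_le[OF ray] in blast)

lemma perron_vector_eq:
  assumes wpos: "\<And>k. w$k > 0" and ew: "A *v w = spectral_radius A *\<^sub>R w"
  shows "perron_vector A = (1 / sum (\<lambda>i. w$i) UNIV) *\<^sub>R w"
  unfolding perron_vector_def
proof (rule the_equality, intro conjI allI)
  have "sum (\<lambda>i. w$i) UNIV > 0" using wpos by (simp add: sum_pos)
  then show "((1 / sum (\<lambda>i. w$i) UNIV) *\<^sub>R w)$i > 0" for i using wpos by simp
  have "sum (\<lambda>i. ((1 / sum (\<lambda>i. w$i) UNIV) *\<^sub>R w)$i) UNIV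
      = (1 / sum (\<lambda>i. w$i) UNIV) * sum (\<lambda>i. w$i) UNIV"
    by (simp add: sum_distrib_left)
  then show "sum (\<lambda>i. ((1 / sum (\<lambda>i. w$i) UNIV) *\<^sub>R w)$i) UNIV = 1"
    using \<open>sum (\<lambda>i. w$i) UNIV > 0\<close> by simp
  show "A *v ((1 / sum (\<lambda>i. w$i) UNIV) *\<^sub>R w) =
      spectral_radius A *\<^sub>R ((1 / sum (\<lambda>i. w$i) UNIV) *\<^sub>R w)"
    using ew by (simp only: matrix_vector_mult_scaleR scaleR_scaleR mult.commute)
next
  fix p assume p: "(\<forall>i. p$i > 0) \<and> A *v p = spectral_radius A *\<^sub>R p \<and> sum (\<lambda>i. p$i) UNIV = 1"
  then obtain c where c: "p = c *\<^sub>R w" using eigenvector_eq_multiple[OF wpos ew] by blast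
  with p have "c * sum (\<lambda>i. w$i) UNIV = 1" by (simp add: sum_distrib_left)
  moreover have "sum (\<lambda>i. w$i) UNIV > 0" using wpos by (simp add: sum_pos)
  ultimately show "p = (1 / sum (\<lambda>i. w$i) UNIV) *\<^sub>R w" using c by (simp add: field_simps)
qed

lemma spectral_radius_rayleigh: "x \<bullet> (A *v x) \<le> spectral_radius A * (x \<bullet> x)"
  and spectral_radius_nonneg: "spectral_radius A \<ge> 0"
  and perron_vector_pos: "perron_vector A $ k > 0"
  and perron_vector_eigen: "A *v perron_vector A = spectral_radius A *\<^sub>R perron_vector A"
proof -
  obtain w r where wpos: "\<And>k. w$k > 0" and ew: "A *v w = r *\<^sub>R w"
    and ray: "\<And>x. x \<bullet> (A *v x) \<le> r * (x \<bullet> x)" and "r \<ge> 0"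
    using perron_eigenpair_exists by blast
  then have r: "spectral_radius A = r" by (rule spectral_radius_eq)
  show "x \<bullet> (A *v x) \<le> spectral_radius A * (x \<bullet> x)" "spectral_radius A \<ge> 0"
    using ray \<open>r \<ge> 0\<close> by (simp_all add: r)
  have p: "perron_vector A = (1 / sum (\<lambda>i. w$i) UNIV) *\<^sub>R w"
    using perron_vector_eq wpos ew r by blast
  have "sum (\<lambda>i. w$i) UNIV > 0" using wpos by (simp add: sum_pos)
  then show "perron_vector A $ k > 0" using wpos by (simp add: p)
  show "A *v perron_vector A = spectral_radius A *\<^sub>R perron_vector A"
    using ew by (simp add: p r matrix_vector_mult_scaleR)
qed


abbreviation M :: "real^'n^'n" where
  "M \<equiv> spectral_radius A *\<^sub>R mat 1 - A"

definition q :: "real^'n" where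
  "q = (1 / norm (perron_vector A)) *\<^sub>R perron_vector A"

lemma q_pos: "q $ k > 0"
proof -
  have "perron_vector A \<noteq> 0" using perron_vector_pos[of k] by auto
  then show ?thesis using perron_vector_pos[of k] by (simp add: q_def)
qed

lemma A_mult_q: "A *v q = spectral_radius A *\<^sub>R q"
  by (simp add: q_def matrix_vector_mult_scaleR perron_vector_eigen)

lemma inner_q_self: "q \<bullet> q = 1"
proof -
  have "perron_vector A \<noteq> 0" using perron_vector_pos by (metis less_irrefl zero_index)
  then show ?thesis by (simp add: q_def dot_square_norm power2_eq_square)
qed

lemma M_mult_vec: "M *v x = spectral_radius A *\<^sub>R x - A *v x"
  by (simp add: matrix_vector_mult_diff_rdistrib flip: scaleR_matrix_vector_assoc)

lemma M_psd: "0 \<le> x \<bullet> (M *v x)"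
  using spectral_radius_rayleigh[of x] by (simp add: M_mult_vec inner_diff_right)

sublocale M: simple_kernel M q
proof
  show "transpose M = M" by (simp add: transpose_diff transpose_scalar symmetric)
  show "q \<bullet> q = 1" by (rule inner_q_self)
  show "M *v q = 0" by (simp add: M_mult_vec A_mult_q)
  show "\<exists>c. x = c *\<^sub>R q" if "M *v x = 0" for x
    using that eigenvector_eq_multiple[OF q_pos A_mult_q, of x] by (simp add: M_mult_vec)
qed

end

section \<open>The long walk distance\<close>

text \<open>Sandwich \<open>x ln (1 + y)\<close> between \<open>x y / (1 + y)\<close> and \<open>x y\<close>, for \<open>y = u(x) / (x a) \<rightarrow> 0\<close>.\<close>

lemma tendsto_mult_ln_ratio:
  fixes u :: "real \<Rightarrow> real"
  assumes a: "a > 0" and u: "(u \<longlongrightarrow> u0) at_top"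
  shows "((\<lambda>x. x * (ln (a + u x / x) - ln a)) \<longlongrightarrow> u0 / a) at_top"
proof -
  define y where "y x = u x / (x * a)" for x
  have "((\<lambda>x::real. 1 / (x * a)) \<longlongrightarrow> 0) at_top" using a by real_asymp
  from tendsto_mult[OF u this] have y0: "(y \<longlongrightarrow> 0) at_top" by (simp add: y_def[abs_def])
  have "eventually (\<lambda>x. \<bar>y x\<bar> < 1/2) at_top"
    using y0[unfolded tendsto_iff, rule_format, of "1/2"] by simp
  then have ev: "eventually (\<lambda>x. x > 0 \<and> \<bar>y x\<bar> < 1/2) at_top"
    by (intro eventually_conj eventually_gt_at_top)
  have eq: "x * (ln (a + u x / x) - ln a) = x * ln (1 + y x)" if "x > 0" "\<bar>y x\<bar> < 1/2" for x
  proof -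
    have "a + u x / x = a * (1 + y x)" using a that by (simp add: y_def field_simps)
    moreover have "1 + y x > 0" using that by simp
    ultimately show ?thesis using a by (simp add: ln_mult)
  qed
  have up: "x * ln (1 + y x) \<le> u x / a" if "x > 0" "\<bar>y x\<bar> < 1/2" for x
  proof -
    have "ln (1 + y x) \<le> y x" using that ln_le_minus_one[of "1 + y x"] by simp
    then have "x * ln (1 + y x) \<le> x * y x" using that by (simp add: mult_left_mono)
    also have "x * y x = u x / a" using that a by (simp add: y_def field_simps)
    finally show ?thesis .
  qed
  have lo: "(u x / a) / (1 + y x) \<le> x * ln (1 + y x)" if "x > 0" "\<bar>y x\<bar> < 1/2" for x
  proof -
    have p: "1 + y x > 0" using that by simp
    have "ln (1 / (1 + y x)) \<le> 1 / (1 + y x) - 1" using p ln_le_minus_one[of "1 / (1 + y x)"] by simp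
    then have "y x / (1 + y x) \<le> ln (1 + y x)" using p by (simp add: ln_div field_simps)
    then have "x * (y x / (1 + y x)) \<le> x * ln (1 + y x)" using that(1) by (intro mult_left_mono) auto
    also have "x * (y x / (1 + y x)) = (u x / a) / (1 + y x)" using that a by (simp add: y_def field_simps)
    finally show ?thesis .
  qed
  have "((\<lambda>x. (u x / a) / (1 + y x)) \<longlongrightarrow> u0 / a) at_top"
    using tendsto_divide[OF tendsto_divide[OF u tendsto_const] tendsto_add[OF tendsto_const y0], of a 1] a
    by simp
  moreover have "((\<lambda>x. u x / a) \<longlongrightarrow> u0 / a) at_top"
    using tendsto_divide[OF u tendsto_const] a by simp
  ultimately have "((\<lambda>x. x * ln (1 + y x)) \<longlongrightarrow> u0 / a) at_top"
    by (rule tendsto_sandwich[rotated 2]) (use ev lo up in \<open>auto elim!: eventually_mono\<close>)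
  then show ?thesis
    by (rule Lim_transform_eventually) (use ev eq in \<open>auto elim!: eventually_mono\<close>)
qed

lemma tendsto_ln_exp_powr_div_ln:
  fixes c :: real
  assumes c: "c > 0"
  shows "((\<lambda>x. ln (exp 1 + x powr c) / ln x) \<longlongrightarrow> c) at_top"
proof -
  have eq: "ln (exp 1 + x powr c) / ln x = c + ln (1 + exp 1 * x powr (-c)) * (1 / ln x)"
    if "x > 1" for x
  proof -
    have xc: "x powr c > 0" using that by simp
    have "exp 1 + x powr c = x powr c * (1 + exp 1 * x powr (-c))"
      using xc that by (simp add: powr_minus field_simps)
    moreover have "1 + exp 1 * x powr (-c) > 0" by (simp add: add_pos_nonneg)
    ultimately have "ln (exp 1 + x powr c) = c * ln x + ln (1 + exp 1 * x powr (-c))"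
      using xc that by (simp add: ln_mult ln_powr)
    moreover have "ln x > 0" using that by simp
    ultimately show ?thesis by (simp add: field_simps)
  qed
  have "((\<lambda>x::real. x powr (-c)) \<longlongrightarrow> 0) at_top"
    using c by (intro tendsto_neg_powr filterlim_ident) auto
  from tendsto_ln[OF tendsto_add[OF tendsto_const tendsto_mult[OF tendsto_const this]], of 1 "exp 1"]
  have "((\<lambda>x. ln (1 + exp 1 * x powr (-c))) \<longlongrightarrow> 0) at_top" by simp
  moreover have "((\<lambda>x::real. 1 / ln x) \<longlongrightarrow> 0) at_top" by real_asymp
  ultimately have "((\<lambda>x. c + ln (1 + exp 1 * x powr (-c)) * (1 / ln x)) \<longlongrightarrow> c + 0 * 0) at_top"
    by (intro tendsto_intros)
  moreover have "eventually (\<lambda>x. c + ln (1 + exp 1 * x powr (-c)) * (1 / ln x)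
      = ln (exp 1 + x powr c) / ln x) at_top"
    using eventually_gt_at_top[of 1] by eventually_elim (use eq in simp)
  ultimately show ?thesis by (simp add: Lim_transform_eventually)
qed

context connected_multigraph
begin

lemma long_walk_resolvent:
  assumes a: "a > 0"
  shows "matrix_inv (mat 1 - inverse (spectral_radius A + inverse a) *\<^sub>R A)
       = (spectral_radius A + 1 / a) *\<^sub>R (a *\<^sub>R outer q q + M.deflated_resolvent (1 / a))"
proof (rule matrix_inv_eqI)
  define t where "t = inverse (spectral_radius A + inverse a)"
  have pos: "spectral_radius A + inverse a > 0"
    using spectral_radius_nonneg a by (simp add: add_nonneg_pos)
  have "t *\<^sub>R (M + (1 / a) *\<^sub>R mat 1) = (t * (spectral_radius A + 1 / a)) *\<^sub>R mat 1 - t *\<^sub>R A"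
    by (simp add: scaleR_diff_right scaleR_add_right scaleR_add_left algebra_simps)
  moreover have "t * (spectral_radius A + 1 / a) = 1" using pos by (simp add: t_def inverse_eq_divide)
  ultimately have "mat 1 - t *\<^sub>R A = t *\<^sub>R (M + (1 / a) *\<^sub>R mat 1)" by simp
  moreover have "(M + (1 / a) *\<^sub>R mat 1) ** (a *\<^sub>R outer q q + M.deflated_resolvent (1 / a)) = mat 1"
    using M.resolvent_decomposition[OF M_psd, of "1 / a"] a by simp
  ultimately show "(mat 1 - inverse (spectral_radius A + inverse a) *\<^sub>R A) **
      ((spectral_radius A + 1 / a) *\<^sub>R (a *\<^sub>R outer q q + M.deflated_resolvent (1 / a))) = mat 1"
    using pos by (simp add: t_def matrix_scalar_ac scalar_matrix_assoc inverse_eq_divide)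
qed

lemma long_walk_resolvent_nth:
  assumes "a > 0"
  shows "matrix_inv (mat 1 - inverse (spectral_radius A + inverse a) *\<^sub>R A) $ k $ l
       = (spectral_radius A + 1 / a) * a * (q$k * q$l + M.deflated_resolvent (1 / a) $ k $ l / a)"
  using long_walk_resolvent[OF assms] assms by (simp add: outer_def field_simps)

definition scaled_log_excess :: "'n \<Rightarrow> 'n \<Rightarrow> real \<Rightarrow> real" where
  "scaled_log_excess k l a =
     a * (ln (q$k * q$l + M.deflated_resolvent (1 / a) $ k $ l / a) - ln (q$k * q$l))"

lemma tendsto_scaled_log_excess:
  "(scaled_log_excess k l \<longlongrightarrow> moore_penrose M $ k $ l / (q$k * q$l)) at_top"
  unfolding scaled_log_excess_def[abs_def]
  using q_pos by (intro tendsto_mult_ln_ratio M.tendsto_deflated_resolvent) simp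

text \<open>The factor \<open>(\<rho> + 1/\<alpha>) \<alpha>\<close> and the terms \<open>ln (q\<^sub>k q\<^sub>l)\<close> of \<open>ln r\<^sub>k\<^sub>l\<close> cancel in the
  long walk approximant.\<close>

lemma long_walk_approx_eventually_eq:
  "eventually (\<lambda>a. ln (exp 1 + a powr (2 / real CARD('n))) / ln a * ((a - 1) / a) *
     ((scaled_log_excess i i a + scaled_log_excess j j a) / 2 - scaled_log_excess i j a)
     = long_walk_approx A i j a) at_top"
proof -
  define G where "G k l a = q$k * q$l + M.deflated_resolvent (1 / a) $ k $ l / a" for k l a
  have G_pos: "eventually (\<lambda>a. G k l a > 0) at_top" for k l
  proof -
    have "((\<lambda>a::real. 1 / a) \<longlongrightarrow> 0) at_top" by real_asymp
    then have "((\<lambda>a. G k l a) \<longlongrightarrow> q$k * q$l + moore_penrose M $ k $ l * 0) at_top"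
      unfolding G_def divide_inverse
      by (intro tendsto_intros M.tendsto_deflated_resolvent[unfolded divide_inverse])
        (simp add: inverse_eq_divide)
    then show ?thesis using q_pos[of k] q_pos[of l] by (simp add: order_tendstoD(1))
  qed
  have "eventually (\<lambda>a. a > 1 \<and> G i i a > 0 \<and> G j j a > 0 \<and> G i j a > 0) at_top"
    using eventually_gt_at_top[of 1] G_pos[of i i] G_pos[of j j] G_pos[of i j]
    by eventually_elim auto
  then show ?thesis
  proof eventually_elim
    case (elim a)
    then have a: "a > 0" "ln a > 0" by auto
    define R where "R k l = ln (matrix_inv (mat 1 - inverse (spectral_radius A + inverse a) *\<^sub>R A) $ k $ l)"
      for k l
    define C where "C = ln ((spectral_radius A + 1 / a) * a)"
    have c: "(spectral_radius A + 1 / a) * a > 0"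
      using spectral_radius_nonneg a by (simp add: add_nonneg_pos)
    have R: "R k l = C + ln (q$k * q$l) + scaled_log_excess k l a / a" if "G k l a > 0" for k l
      using ln_mult_pos[OF c that] a long_walk_resolvent_nth[OF a(1), of k l]
      by (simp add: R_def C_def scaled_log_excess_def G_def)
    have "(R i i + R j j) / 2 - R i j
        = ((scaled_log_excess i i a + scaled_log_excess j j a) / 2 - scaled_log_excess i j a) / a
          + ((ln (q$i * q$i) + ln (q$j * q$j)) / 2 - ln (q$i * q$j))"
      using R[of i i] R[of j j] R[of i j] elim by (simp add: field_simps)
    also have "(ln (q$i * q$i) + ln (q$j * q$j)) / 2 - ln (q$i * q$j) = 0"
      using q_pos[of i] q_pos[of j] by (simp add: ln_mult_pos)
    finally have "(R i i + R j j) / 2 - R i j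
        = ((scaled_log_excess i i a + scaled_log_excess j j a) / 2 - scaled_log_excess i j a) / a"
      by simp
    moreover have "long_walk_approx A i j a
        = ln (exp 1 + a powr (2 / real CARD('n))) * (a - 1) / ln a * ((R i i + R j j) / 2 - R i j)"
      by (simp only: long_walk_approx_def Let_def R_def)
    ultimately have "long_walk_approx A i j a = ln (exp 1 + a powr (2 / real CARD('n))) * (a - 1) / ln a
        * (((scaled_log_excess i i a + scaled_log_excess j j a) / 2 - scaled_log_excess i j a) / a)"
      by (simp only:)
    then show ?case using a by (simp add: field_simps)
  qed
qed

lemma tendsto_long_walk_approx:
  "(long_walk_approx A i j \<longlongrightarrow> 2 / real CARD('n) *
     ((moore_penrose M $ i $ i / (q$i * q$i) + moore_penrose M $ j $ j / (q$j * q$j)) / 2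
      - moore_penrose M $ i $ j / (q$i * q$j))) at_top"
proof -
  have "((\<lambda>a::real. (a - 1) / a) \<longlongrightarrow> 1) at_top" by real_asymp
  from tendsto_mult[OF tendsto_ln_exp_powr_div_ln this, of "2 / real CARD('n)"]
  have theta: "((\<lambda>a. ln (exp 1 + a powr (2 / real CARD('n))) / ln a * ((a - 1) / a))
      \<longlongrightarrow> 2 / real CARD('n)) at_top"
    by simp
  have "((\<lambda>a. (scaled_log_excess i i a + scaled_log_excess j j a) / 2 - scaled_log_excess i j a)
      \<longlongrightarrow> (moore_penrose M $ i $ i / (q$i * q$i) + moore_penrose M $ j $ j / (q$j * q$j)) / 2
        - moore_penrose M $ i $ j / (q$i * q$j)) at_top"
    by (intro tendsto_intros tendsto_scaled_log_excess) simp
  from tendsto_mult[OF theta this] show ?thesis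
    by (rule Lim_transform_eventually[OF _ long_walk_approx_eventually_eq])
qed

end

section \<open>The resistance distance of the rescaled graph\<close>

lemma transpose_laplacian:
  assumes "transpose B = B" shows "transpose (laplacian B) = laplacian B"
proof -
  have "B $ j $ i = B $ i $ j" for i j using transpose_eq_imp_nth_sym[OF assms] .
  then show ?thesis by (simp add: laplacian_def transpose_def vec_eq_iff)
qed

lemma laplacian_weighted_mult_vec:
  fixes A :: "real^'n^'n"
  assumes ew: "A *v w = r *\<^sub>R w"
  shows "laplacian (\<chi> k l. w$k * A$k$l * w$l) *v y
       = (\<chi> k. w$k * ((r *\<^sub>R mat 1 - A) *v (\<chi> m. w$m * y$m)) $ k)"
proof -
  let ?B = "(\<chi> k l. w$k * A$k$l * w$l) :: real^'n^'n"
  have "(laplacian ?B *v y) $ k = w$k * ((r *\<^sub>R mat 1 - A) *v (\<chi> m. w$m * y$m)) $ k" for k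
  proof -
    have "(\<Sum>m\<in>UNIV. A$k$m * w$m) = r * w$k"
      using arg_cong[OF ew, of "\<lambda>v. v $ k"] by (simp add: matrix_vector_mult_def)
    moreover have "(\<Sum>m\<in>UNIV. ?B $ k $ m) = w$k * (\<Sum>m\<in>UNIV. A$k$m * w$m)"
      by (simp add: sum_distrib_left mult.assoc)
    ultimately have row: "(\<Sum>m\<in>UNIV. ?B $ k $ m) = w$k * (r * w$k)" by simp
    have "(laplacian ?B *v y) $ k
        = (\<Sum>l\<in>UNIV. (if k = l then (\<Sum>m\<in>UNIV. ?B$k$m) else 0) * y$l) - (\<Sum>l\<in>UNIV. ?B$k$l * y$l)"
      by (simp add: laplacian_def matrix_vector_mult_def left_diff_distrib sum_subtractf)
    also have "(\<Sum>l\<in>UNIV. (if k = l then (\<Sum>m\<in>UNIV. ?B$k$m) else 0) * y$l) = (\<Sum>m\<in>UNIV. ?B$k$m) * y$k"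
      by (rule trans[OF sum.cong[OF refl, of _ _ "\<lambda>l. if l = k then (\<Sum>m\<in>UNIV. ?B$k$m) * y$l else 0"]])
        auto
    also have "(\<Sum>l\<in>UNIV. ?B$k$l * y$l) = w$k * (A *v (\<chi> m. w$m * y$m)) $ k"
      by (simp add: matrix_vector_mult_def sum_distrib_left mult_ac)
    finally show ?thesis
      using row by (simp add: matrix_vector_mult_diff_rdistrib algebra_simps
          flip: scaleR_matrix_vector_assoc)
  qed
  then show ?thesis by (simp add: vec_eq_iff)
qed

context connected_multigraph
begin

lemma laplacian_weighted_simple_kernel:
  assumes wpos: "\<And>k. w$k > 0" and ew: "A *v w = spectral_radius A *\<^sub>R w"
  shows "simple_kernel (laplacian (\<chi> k l. w$k * A$k$l * w$l)) (\<chi> k. 1 / sqrt (real CARD('n)))"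
proof
  let ?L = "laplacian (\<chi> k l. w$k * A$k$l * w$l)" and ?e = "(\<chi> k. 1 / sqrt (real CARD('n))) :: real^'n"
  note Lv = laplacian_weighted_mult_vec[OF ew]
  show "transpose ?L = ?L"
    by (rule transpose_laplacian)
      (simp add: transpose_def vec_eq_iff transpose_eq_imp_nth_sym[OF symmetric] mult_ac)
  have "real CARD('n) > 0" by simp
  then show "?e \<bullet> ?e = 1" by (simp add: inner_vec_def)
  have "M *v (\<chi> m. w$m * ?e$m) = 0"
  proof -
    have "(\<chi> m. w$m * ?e$m) = (1 / sqrt (real CARD('n))) *\<^sub>R w" by (simp add: vec_eq_iff)
    then show ?thesis by (simp add: M_mult_vec matrix_vector_mult_scaleR ew)
  qed
  then show "?L *v ?e = 0" by (simp add: Lv vec_eq_iff)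
  fix y assume "?L *v y = 0"
  then have "w$k * (M *v (\<chi> m. w$m * y$m)) $ k = 0" for k
    by (simp add: Lv vec_eq_iff)
  then have "M *v (\<chi> m. w$m * y$m) = 0" using wpos by (simp add: vec_eq_iff less_imp_neq[symmetric])
  then have "A *v (\<chi> m. w$m * y$m) = spectral_radius A *\<^sub>R (\<chi> m. w$m * y$m)"
    by (simp add: M_mult_vec)
  then obtain c where c: "(\<chi> m. w$m * y$m) = c *\<^sub>R w"
    using eigenvector_eq_multiple[OF wpos ew] by blast
  have "y$k = c" for k
  proof -
    have "w$k * y$k = w$k * c" using arg_cong[OF c, of "\<lambda>v. v $ k"] by simp
    then show ?thesis using wpos[of k] by simp
  qed
  then show "\<exists>c. y = c *\<^sub>R ?e"
    by (intro exI[of _ "c * sqrt (real CARD('n))"]) (simp add: vec_eq_iff)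
qed

text \<open>If \<open>L y = e\<^sub>i - e\<^sub>j\<close> for the Laplacian \<open>L = diag w M diag w\<close>, then \<open>M (w y) = x\<close> with
  \<open>x = e\<^sub>i / w\<^sub>i - e\<^sub>j / w\<^sub>j \<bottom> q\<close>, so \<open>w y\<close> and \<open>M\<^sup>+ x\<close> differ by a multiple of \<open>q\<close>.\<close>

lemma resistance_dist_weighted:
  assumes wpos: "\<And>k. w$k > 0" and ew: "A *v w = spectral_radius A *\<^sub>R w"
  shows "resistance_dist (\<chi> k l. w$k * A$k$l * w$l) i j
       = moore_penrose M $ i $ i / (w$i * w$i) + moore_penrose M $ j $ j / (w$j * w$j)
         - 2 * (moore_penrose M $ i $ j / (w$i * w$j))"
proof -
  let ?L = "laplacian (\<chi> k l. w$k * A$k$l * w$l)" and ?e = "(\<chi> k. 1 / sqrt (real CARD('n))) :: real^'n"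
  interpret L: simple_kernel ?L ?e by (rule laplacian_weighted_simple_kernel[OF wpos ew])
  define z where "z = axis i 1 - axis j (1::real)"
  define y where "y = moore_penrose ?L *v z"
  define x where "x = (1 / w$i) *\<^sub>R axis i 1 - (1 / w$j) *\<^sub>R axis j (1::real)"
  have x: "x$k = z$k / w$k" for k by (simp add: x_def z_def axis_def)
  have sum_z: "(\<Sum>k\<in>UNIV. z$k) = 0" by (simp add: z_def axis_def sum_subtractf)
  have "?e \<bullet> z = (1 / sqrt (real CARD('n))) * (\<Sum>k\<in>UNIV. z$k)"
    by (simp add: inner_vec_def sum_distrib_left)
  then have "?L *v y = z" using L.mult_moore_penrose[of z] sum_z by (simp add: y_def)
  then have wMwy: "w$k * (M *v (\<chi> m. w$m * y$m)) $ k = z$k" for k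
    by (simp add: laplacian_weighted_mult_vec[OF ew] vec_eq_iff)
  have "(M *v (\<chi> m. w$m * y$m)) $ k = x $ k" for k
    using wMwy[of k] wpos[of k] by (simp add: x eq_divide_eq ac_simps)
  then have Mwy: "M *v (\<chi> m. w$m * y$m) = x" by (simp add: vec_eq_iff)
  have w0: "w$k \<noteq> 0" for k using wpos[of k] by simp
  obtain d where "q = d *\<^sub>R w" using eigenvector_eq_multiple[OF wpos ew A_mult_q] by blast
  then have "q \<bullet> x = (\<Sum>k\<in>UNIV. d * z$k)"
    unfolding inner_vec_def by (intro sum.cong refl) (simp add: x w0)
  then have "q \<bullet> x = 0" using sum_z by (simp flip: sum_distrib_left)
  then have "M *v ((\<chi> m. w$m * y$m) - moore_penrose M *v x) = 0"
    using M.mult_moore_penrose[of x] Mwy by (simp add: matrix_vector_mult_diff_distrib)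
  then obtain c where "(\<chi> m. w$m * y$m) - moore_penrose M *v x = c *\<^sub>R q"
    using M.kernel_span by blast
  then have c: "(\<chi> m. w$m * y$m) = c *\<^sub>R q + moore_penrose M *v x"
    by (simp only: diff_eq_eq)
  have "resistance_dist (\<chi> k l. w$k * A$k$l * w$l) i j = z \<bullet> y"
    by (simp add: resistance_dist_def z_def y_def)
  also have "\<dots> = x \<bullet> (\<chi> m. w$m * y$m)"
    unfolding inner_vec_def by (intro sum.cong refl) (simp add: x w0)
  also have "\<dots> = x \<bullet> (moore_penrose M *v x)"
    using \<open>q \<bullet> x = 0\<close> by (simp add: c inner_add_right inner_commute)
  also have "\<dots> = moore_penrose M $ i $ i / (w$i * w$i) + moore_penrose M $ j $ j / (w$j * w$j)
         - 2 * (moore_penrose M $ i $ j / (w$i * w$j))"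
    unfolding x_def
    by (subst quadratic_form_axis_diff)
      (simp_all add: transpose_eq_imp_nth_sym[OF M.transpose_moore_penrose])
  finally show ?thesis .
qed

end

theorem theorem8:
  fixes A :: "real^'n^'n" and i j :: 'n
  assumes "CARD('n) \<ge> 2"
    and "weighted_adjacency A"
    and "connected_graph A"
  defines "p \<equiv> perron_vector A"
  defines "p' \<equiv> (sqrt (real CARD('n)) / norm p) *\<^sub>R p"
  defines "B \<equiv> (\<chi> k l. p'$k * A$k$l * p'$l)"
  shows "(long_walk_approx A i j \<longlongrightarrow> resistance_dist B i j) at_top \<and>
         long_walk_dist A i j = resistance_dist B i j"
proof -
  interpret connected_multigraph A using assms(2,3) by unfold_locales
  have p': "p' = sqrt (real CARD('n)) *\<^sub>R q" by (simp add: p'_def p_def q_def)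
  have "resistance_dist B i j = moore_penrose M $ i $ i / (p'$i * p'$i)
      + moore_penrose M $ j $ j / (p'$j * p'$j) - 2 * (moore_penrose M $ i $ j / (p'$i * p'$j))"
    unfolding B_def
    by (rule resistance_dist_weighted) (simp_all add: p' q_pos matrix_vector_mult_scaleR A_mult_q)
  also have "\<dots> = 2 / real CARD('n) *
      ((moore_penrose M $ i $ i / (q$i * q$i) + moore_penrose M $ j $ j / (q$j * q$j)) / 2
       - moore_penrose M $ i $ j / (q$i * q$j))"
    by (simp add: p' field_simps)
  finally have lim: "(long_walk_approx A i j \<longlongrightarrow> resistance_dist B i j) at_top"
    using tendsto_long_walk_approx by simp
  then show ?thesis by (simp add: long_walk_dist_def tendsto_Lim)
qed

end
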